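(* Let $R$ be an integral domain with field of fractions $K$, and let $n$ be a nonnegative integer. If $D\colon R\to R$ belongs to the closure of $\mathcal{O}^n_0(R)$ in $R^R$, then $D/j$ (i.e. $x\mapsto D(x)/x$), as a map from the semigroup $R^*$ to $K$, is a generalized polynomial of degree at most $n$.
   Context: Rings are commutative with unit. A derivation on $R$ is a map $d\colon R\to R$ with $d(x+y)=d(x)+d(y)$ and $d(xy)=d(x)y+d(y)x$. A differential operator of degree at most $n$ on $R$ is an $R$-linear combination of finitely many maps $d_1\circ\cdots\circ d_k$, $d_i$ derivations, $k\le n$ (for $k=0$ the identity map $j$). $\mathcal{O}^n_0(R)$ is the set of such operators $D$ with $D(1)=0$. $R^R$ carries the product topology with $R$ discrete. $R^*$ is the semigroup $R\setminus\{0\}$ under multiplication. For $f$ on an abelian semigroup $G$, $\Delta_g f(x)=f(x\cdot g)-f(x)$; $f$ is a generalized polynomial of degree at most $n$ if $\Delta_{g_1}\cdots\Delta_{g_{n+1}}f=0$ for all $g_1,\dots,g_{n+1}\in G$. *)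

theory Defs
  imports "HOL-Analysis.Analysis" "HOL-Computational_Algebra.Fraction_Field"
begin

definition derivation :: "('a::comm_ring_1 \<Rightarrow> 'a) \<Rightarrow> bool" where
  "derivation d \<longleftrightarrow>
     (\<forall>x y. d (x + y) = d x + d y) \<and> (\<forall>x y. d (x * y) = d x * y + d y * x)"

definition diff_ops :: "nat \<Rightarrow> ('a::comm_ring_1 \<Rightarrow> 'a) set" where
  "diff_ops n = {D. \<exists>(m::nat) (c::nat \<Rightarrow> 'a) (ds::nat \<Rightarrow> ('a \<Rightarrow> 'a) list).
      (\<forall>i<m. length (ds i) \<le> n \<and> (\<forall>d\<in>set (ds i). derivation d)) \<and>
      D = (\<lambda>x. \<Sum>i<m. c i * foldr (\<circ>) (ds i) id x)}"

definition O0 :: "nat \<Rightarrow> ('a::comm_ring_1 \<Rightarrow> 'a) set" where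
  "O0 n = {D \<in> diff_ops n. D 1 = 0}"

definition RR_top :: "('a \<Rightarrow> 'a) topology" where
  "RR_top = product_topology (\<lambda>_. discrete_topology UNIV) UNIV"

definition mdelta :: "'a::times \<Rightarrow> ('a \<Rightarrow> 'b::minus) \<Rightarrow> 'a \<Rightarrow> 'b" where
  "mdelta g f = (\<lambda>x. f (x * g) - f x)"

definition gen_poly_on :: "'a::times set \<Rightarrow> nat \<Rightarrow> ('a \<Rightarrow> 'b::{minus,zero}) \<Rightarrow> bool" where
  "gen_poly_on G n f \<longleftrightarrow>
     (\<forall>gs. length gs = Suc n \<and> set gs \<subseteq> G \<longrightarrow> (\<forall>x\<in>G. foldr mdelta gs f x = 0))"

end

theory Submission
  imports Defs
begin

text \<open>Write [E, g] x = E (x g) - g E x for the commutator of an operator E with multiplication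
  by g. The Leibniz rule gives [d \<circ> E, g] = d \<circ> [E, g] + d g E for a derivation d, so every
  commutator lowers the order of a differential operator by one, and an operator of order 0 is a
  multiplication, which commutes with multiplications. Hence any n + 1 iterated commutators kill
  an operator of order at most n. Since the difference operator of the semigroup acts on
  E x / x as (\<Delta>_g (E/j)) x = [E, g] x / (x g), iterated differences of D/j are iterated
  commutators of D divided by a nonzero element. Finally an iterated difference at x only
  involves the values of D at finitely many points, so the property passes from differential
  operators to their closure in the product topology.\<close>

definition mult_comm :: "'a::comm_ring_1 \<Rightarrow> ('a \<Rightarrow> 'a) \<Rightarrow> 'a \<Rightarrow> 'a" where
  "mult_comm g E = (\<lambda>x. E (x * g) - g * E x)"

fun comm_order_le :: "nat \<Rightarrow> ('a::comm_ring_1 \<Rightarrow> 'a) \<Rightarrow> bool" where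
  "comm_order_le 0 E \<longleftrightarrow> (\<forall>g x. mult_comm g E x = 0)"
| "comm_order_le (Suc k) E \<longleftrightarrow> (\<forall>g. comm_order_le k (mult_comm g E))"

lemma comm_order_le_zero: "comm_order_le k (\<lambda>x. 0::'a::comm_ring_1)"
  by (induction k) (auto simp: mult_comm_def)

lemma comm_order_le_add:
  "comm_order_le k E \<Longrightarrow> comm_order_le k F \<Longrightarrow> comm_order_le k (\<lambda>x. E x + F x)"
proof (induction k arbitrary: E F)
  case 0
  then show ?case by (simp add: mult_comm_def algebra_simps)
next
  case (Suc k)
  have "mult_comm g (\<lambda>x. E x + F x) = (\<lambda>x. mult_comm g E x + mult_comm g F x)" for g
    by (auto simp: mult_comm_def algebra_simps)
  with Suc show ?case by auto
qed

lemma comm_order_le_scale: "comm_order_le k E \<Longrightarrow> comm_order_le k (\<lambda>x. c * E x)"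
proof (induction k arbitrary: E)
  case 0
  have "mult_comm g (\<lambda>x. c * E x) x = c * mult_comm g E x" for g x
    by (simp add: mult_comm_def algebra_simps)
  with 0 show ?case by simp
next
  case (Suc k)
  have "mult_comm g (\<lambda>x. c * E x) = (\<lambda>x. c * mult_comm g E x)" for g
    by (auto simp: mult_comm_def algebra_simps)
  with Suc show ?case by auto
qed

lemma comm_order_le_sum:
  assumes "finite I" "\<And>i. i \<in> I \<Longrightarrow> comm_order_le k (E i)"
  shows "comm_order_le k (\<lambda>x. \<Sum>i\<in>I. E i x)"
  using assms by (induction I rule: finite_induct) (auto intro: comm_order_le_zero comm_order_le_add)

lemma comm_order_le_Suc: "comm_order_le k E \<Longrightarrow> comm_order_le (Suc k) E"
proof (induction k arbitrary: E)
  case 0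
  then have "mult_comm g E = (\<lambda>x. 0)" for g
    by auto
  then show ?case
    using comm_order_le_zero[of 0] by simp
qed simp

lemma comm_order_le_mono: "comm_order_le k E \<Longrightarrow> k \<le> n \<Longrightarrow> comm_order_le n E"
proof (induction n)
  case (Suc n)
  then show ?case
    using comm_order_le_Suc by (metis le_Suc_eq)
qed simp

lemma foldr_mult_comm_eq_zero:
  "comm_order_le k E \<Longrightarrow> length gs = Suc k \<Longrightarrow> foldr mult_comm gs E x = 0"
proof (induction k arbitrary: E gs)
  case 0
  then obtain g where "gs = [g]"
    by (cases gs) auto
  with 0 show ?case by simp
next
  case (Suc k)
  then obtain gs' g where "gs = gs' @ [g]"
    by (cases gs rule: rev_cases) auto
  with Suc show ?case by simp
qed

lemma derivation_diff: "derivation d \<Longrightarrow> d (a - b) = d a - d b"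
  unfolding derivation_def by (metis add_diff_cancel diff_add_cancel eq_diff_eq)

lemma derivation_zero: "derivation d \<Longrightarrow> d 0 = 0"
  using derivation_diff[of d 0 0] by simp

lemma mult_comm_derivation_comp:
  assumes "derivation d"
  shows "mult_comm g (d \<circ> E) x = d (mult_comm g E x) + d g * E x"
proof -
  have "d (g * E x) = d g * E x + d (E x) * g"
    using assms unfolding derivation_def by blast
  moreover have "d (mult_comm g E x) = d (E (x * g)) - d (g * E x)"
    using derivation_diff[OF assms] by (simp add: mult_comm_def)
  ultimately show ?thesis
    by (simp add: mult_comm_def algebra_simps)
qed

lemma comm_order_le_derivation_comp:
  "derivation d \<Longrightarrow> comm_order_le k E \<Longrightarrow> comm_order_le (Suc k) (d \<circ> E)"
proof (induction k arbitrary: E)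
  case 0
  then have "mult_comm g (d \<circ> E) = (\<lambda>x. d g * E x)" for g
    by (simp add: mult_comm_derivation_comp derivation_zero fun_eq_iff del: o_apply)
  moreover have "comm_order_le 0 (\<lambda>x. d g * E x)" for g
    using 0 comm_order_le_scale by blast
  ultimately show ?case
    by (simp del: comm_order_le.simps(1) o_apply)
next
  case (Suc k)
  have "mult_comm g (d \<circ> E) = (\<lambda>x. (d \<circ> mult_comm g E) x + d g * E x)" for g
    by (simp add: mult_comm_derivation_comp[OF Suc.prems(1)] fun_eq_iff)
  moreover have "comm_order_le (Suc k) (\<lambda>x. (d \<circ> mult_comm g E) x + d g * E x)" for g
    using Suc by (intro comm_order_le_add comm_order_le_scale) auto
  ultimately show ?case
    by (metis comm_order_le.simps(2))
qed

lemma comm_order_le_derivations: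
  "\<forall>d\<in>set ds. derivation d \<Longrightarrow> comm_order_le (length ds) (foldr (\<circ>) ds id)"
proof (induction ds)
  case Nil
  then show ?case by (simp add: mult_comm_def)
next
  case (Cons d ds)
  then have "comm_order_le (Suc (length ds)) (d \<circ> foldr (\<circ>) ds id)"
    by (intro comm_order_le_derivation_comp Cons.IH) auto
  moreover have "foldr (\<circ>) (d # ds) id = d \<circ> foldr (\<circ>) ds id"
    by simp
  ultimately show ?case
    by (simp only: length_Cons)
qed

lemma diff_ops_comm_order_le:
  assumes "D \<in> diff_ops n"
  shows "comm_order_le n D"
proof -
  obtain m :: nat and c ds
    where ds: "\<forall>i<m. length (ds i) \<le> n \<and> (\<forall>d\<in>set (ds i). derivation d)"
      and D: "D = (\<lambda>x. \<Sum>i<m. c i * foldr (\<circ>) (ds i) id x)"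
    using assms unfolding diff_ops_def by blast
  have "comm_order_le n (\<lambda>x. c i * foldr (\<circ>) (ds i) id x)" if "i < m" for i
    using ds that by (blast intro: comm_order_le_scale comm_order_le_mono comm_order_le_derivations)
  then show ?thesis
    unfolding D by (intro comm_order_le_sum) auto
qed

lemma foldr_mdelta_Fract:
  fixes E :: "'a::idom \<Rightarrow> 'a"
  assumes "x \<noteq> 0" "0 \<notin> set gs"
  shows "foldr mdelta gs (\<lambda>y. Fract (E y) y) x = Fract (foldr mult_comm gs E x) (x * prod_list gs)"
  using assms
proof (induction gs arbitrary: x)
  case (Cons g gs)
  let ?C = "foldr mult_comm gs E"
  have "prod_list gs \<noteq> 0" "g \<noteq> 0"
    using Cons.prems(2) by (auto simp: prod_list_zero_iff)
  then have "Fract (?C (x * g)) (x * g * prod_list gs) - Fract (?C x) (x * prod_list gs)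
      = Fract (mult_comm g ?C x) (x * prod_list (g # gs))"
    using Cons.prems(1) by (simp add: eq_fract mult_comm_def algebra_simps)
  with Cons show ?case
    by (simp add: mdelta_def mult.assoc)
qed simp

fun mdelta_points :: "'a::times list \<Rightarrow> 'a \<Rightarrow> 'a set" where
  "mdelta_points [] x = {x}"
| "mdelta_points (g # gs) x = mdelta_points gs (x * g) \<union> mdelta_points gs x"

lemma finite_mdelta_points: "finite (mdelta_points gs x)"
  by (induction gs arbitrary: x) auto

lemma foldr_mdelta_cong:
  "\<forall>y\<in>mdelta_points gs x. f y = f' y \<Longrightarrow> foldr mdelta gs f x = foldr mdelta gs f' x"
  by (induction gs arbitrary: x) (auto simp: mdelta_def)

lemma closure_of_RR_top_agree_on_finite:
  assumes "D \<in> RR_top closure_of S" "finite F"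
  obtains D' where "D' \<in> S" "\<forall>y\<in>F. D' y = D y"
proof -
  define U where "U = (\<Pi>\<^sub>E i\<in>UNIV. if i \<in> F then {D i} else UNIV)"
  have "openin RR_top U"
    unfolding U_def RR_top_def
    by (rule product_topology_basis) (auto intro: finite_subset[OF _ \<open>finite F\<close>])
  moreover have "D \<in> U"
    unfolding U_def by auto
  ultimately obtain D' where "D' \<in> S" "D' \<in> U"
    using assms(1) unfolding in_closure_of by blast
  moreover have "D' y = D y" if "y \<in> F" for y
    using \<open>D' \<in> U\<close> that unfolding U_def by (auto dest: PiE_mem[of _ _ _ y])
  ultimately show ?thesis
    using that by blast
qed

theorem lemma2p5:
  fixes D :: "'a::idom \<Rightarrow> 'a" and n :: nat
  assumes "D \<in> RR_top closure_of (O0 n)"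
  shows "gen_poly_on (UNIV - {0}) n (\<lambda>x. Fract (D x) x)"
  unfolding gen_poly_on_def
proof (intro allI impI ballI)
  fix gs :: "'a list" and x :: 'a
  assume gs: "length gs = Suc n \<and> set gs \<subseteq> UNIV - {0}" and x: "x \<in> UNIV - {0}"
  obtain D' where "D' \<in> O0 n" and agree: "\<forall>y\<in>mdelta_points gs x. D' y = D y"
    using closure_of_RR_top_agree_on_finite[OF assms finite_mdelta_points] .
  then have "foldr mult_comm gs D' x = 0"
    using gs by (auto simp: O0_def intro: foldr_mult_comm_eq_zero diff_ops_comm_order_le)
  then have "foldr mdelta gs (\<lambda>y. Fract (D' y) y) x = 0"
    using gs x by (simp add: foldr_mdelta_Fract Zero_fract_def eq_fract subset_Diff_insert)
  moreover have "foldr mdelta gs (\<lambda>y. Fract (D' y) y) x = foldr mdelta gs (\<lambda>y. Fract (D y) y) x"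
    using agree by (intro foldr_mdelta_cong) auto
  ultimately show "foldr mdelta gs (\<lambda>x. Fract (D x) x) x = 0"
    by simp
qed

end
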